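(* Let $R_n(x)=\sum_{k=0}^nR_{n,k}x^k$ for $n\ge1$. Then for every $n\ge1$, $R_n(x)$ has only real zeros, all lying in $[-1,0)$, and $R_n(x)$ separates $R_{n+1}(x)$. More precisely, $x=-1$ is a zero of $R_n(x)$ of multiplicity $\lfloor n/2\rfloor+1$, and $R_n(x)$ has $\lceil n/2\rceil-1$ further zeros, which are simple.
   Context: Let $D$ be the derivation of $\mathbb{Q}[y,z]$ with $D(y)=z^2$, $D(z)=yz$ (corresponding to $d/dx$ with $y=\tan x$, $z=\sec x$). The integers $R_{n,k}$ are defined for $n\ge1$ by $D^n(y+z)=\sum_{k=0}^nR_{n,k}y^{n-k}z^{k+1}$ in $\mathbb{Q}[y,z]$. Equivalently, $R_1(x)=1+x$ and $R_{n+1}(x)=(1+nx^2)R_n(x)+x(1-x^2)R_n'(x)$ for $n\ge1$. For real polynomials $f,F$ with only real zeros, with zeros $r_1\ge r_2\ge\cdots$ of $f$ and $s_1\ge s_2\ge\cdots$ of $F$ (listed with multiplicity), $f$ separates $F$ means $\deg f\le\deg F\le\deg f+1$ and $s_1\ge r_1\ge s_2\ge r_2\ge s_3\ge r_3\ge\cdots$. *)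

theory Defs
  imports "HOL-Computational_Algebra.Polynomial"
begin

text \<open>The polynomials R_n(x), n \<ge> 1, via the recurrence
  R_1(x) = 1 + x,  R_{n+1}(x) = (1 + n x^2) R_n(x) + x (1 - x^2) R_n'(x).
  The value at index 0 is an unused dummy.\<close>
fun R :: "nat \<Rightarrow> real poly" where
  "R 0 = 0"
| "R (Suc 0) = [:1, 1:]"
| "R (Suc (Suc n)) =
     [:1, 0, real (Suc n):] * R (Suc n) + [:0, 1, 0, -1:] * pderiv (R (Suc n))"

definition only_real_zeros :: "real poly \<Rightarrow> bool" where
  "only_real_zeros f \<longleftrightarrow> f \<noteq> 0 \<and>
     (\<forall>z::complex. poly (map_poly of_real f) z = 0 \<longrightarrow> z \<in> \<real>)"

definition zero_list :: "real poly \<Rightarrow> real list \<Rightarrow> bool" where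
  "zero_list f rs \<longleftrightarrow> f \<noteq> 0 \<and> sorted_wrt (\<ge>) rs \<and>
     f = smult (lead_coeff f) (prod_list (map (\<lambda>r. [:-r, 1:]) rs))"

definition separates :: "real poly \<Rightarrow> real poly \<Rightarrow> bool" where
  "separates f F \<longleftrightarrow> (\<exists>rs ss. zero_list f rs \<and> zero_list F ss \<and>
     degree f \<le> degree F \<and> degree F \<le> degree f + 1 \<and>
     (\<forall>i < length rs. rs ! i \<le> ss ! i) \<and>
     (\<forall>i. i < length rs \<and> Suc i < length ss \<longrightarrow> ss ! Suc i \<le> rs ! i))"

end

theory Submission
  imports Defs
begin

text \<open>Let \<open>m = \<lfloor>n/2\<rfloor> + 1\<close>. By induction on \<open>n\<close>, \<open>R\<^sub>n = c (1 + x)\<^sup>m P\<close> where \<open>c > 0\<close> and \<open>P\<close> is monic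
  with simple zeros \<open>0 > t\<^sub>1 > \<dots> > t\<^sub>n\<^sub>-\<^sub>m > -1\<close>. Because \<open>x (1 - x\<^sup>2) = x (1 - x) (1 + x)\<close>, the
  recurrence maps \<open>(1 + x)\<^sup>m P\<close> to \<open>(1 + x)\<^sup>m B\<close> with
  \<open>B = (1 + n x\<^sup>2 + m x (1 - x)) P + x (1 - x\<^sup>2) P'\<close>. Hence \<open>B(0) = P(0) > 0\<close>,
  \<open>B(t\<^sub>i) = t\<^sub>i (1 - t\<^sub>i\<^sup>2) P'(t\<^sub>i)\<close> alternates in sign, and \<open>B(-1) = (n + 1 - 2m) P(-1)\<close>.
  For odd \<open>n\<close>, \<open>B\<close> vanishes at \<open>-1\<close> and the multiplicity of \<open>-1\<close> grows by one; for even \<open>n\<close>,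
  \<open>B(-1) = -P(-1)\<close> supplies one more sign change. Either way the intermediate value theorem puts
  all remaining zeros strictly between consecutive points of \<open>0 > t\<^sub>1 > \<dots> > -1\<close>, and this strict
  interlacing is what makes \<open>R\<^sub>n\<close> separate \<open>R\<^sub>n\<^sub>+\<^sub>1\<close>.\<close>

section \<open>Sorted and interlacing lists\<close>

lemma count_list_replicate: "count_list (replicate m a) x = (if x = a then m else 0)"
  by (induction m) auto

lemma count_list_distinct: "distinct xs \<Longrightarrow> count_list xs x = (if x \<in> set xs then 1 else 0)"
  by (induction xs) auto

lemma sorted_wrt_greater_imp_distinct: "sorted_wrt (>) (xs :: 'a::order list) \<Longrightarrow> distinct xs"
  by (induction xs) auto

lemma sorted_wrt_ge_append_replicate:
  fixes a :: "'a::order"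
  assumes "sorted_wrt (>) xs" "\<forall>x\<in>set xs. a < x"
  shows "sorted_wrt (\<ge>) (xs @ replicate m a)"
proof -
  have "sorted_wrt (\<ge>) (replicate m a)"
    by (induction m) auto
  then show ?thesis
    using assms sorted_wrt_mono_rel[of xs "(>)" "(\<ge>)"] by (auto simp: sorted_wrt_append less_imp_le)
qed

lemma sorted_wrt_greater_if_bracketed:
  fixes us :: "'a::order list"
  assumes "\<forall>k<length us. E ! Suc k < us ! k \<and> us ! k < E ! k"
  shows "sorted_wrt (>) us"
  unfolding sorted_wrt_iff_nth_Suc_transp[OF transp_on_greater]
  using assms by (metis Suc_lessD dual_order.strict_trans)

definition interlacing :: "('a \<Rightarrow> 'a \<Rightarrow> bool) \<Rightarrow> 'a list \<Rightarrow> 'a list \<Rightarrow> bool" where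
  "interlacing rel xs ys \<longleftrightarrow> length xs \<le> length ys \<and> length ys \<le> Suc (length xs) \<and>
     (\<forall>i<length xs. rel (xs ! i) (ys ! i)) \<and>
     (\<forall>i. i < length xs \<and> Suc i < length ys \<longrightarrow> rel (ys ! Suc i) (xs ! i))"

lemma interlacing_mono:
  "interlacing rel xs ys \<Longrightarrow> (\<And>x y. rel x y \<Longrightarrow> rel' x y) \<Longrightarrow> interlacing rel' xs ys"
  unfolding interlacing_def by blast

lemma interlacing_append_replicate:
  fixes a :: "'a::order"
  assumes "interlacing (\<le>) xs ys" "\<forall>x\<in>set (xs @ ys). a \<le> x"
    and "length xs + m \<le> length ys + m'" "length ys + m' \<le> Suc (length xs + m)"
  shows "interlacing (\<le>) (xs @ replicate m a) (ys @ replicate m' a)"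
  unfolding interlacing_def
proof (intro conjI allI impI)
  fix i
  assume "i < length (xs @ replicate m a)"
  then show "(xs @ replicate m a) ! i \<le> (ys @ replicate m' a) ! i"
    using assms by (cases "i < length ys") (auto simp: interlacing_def nth_append)
next
  fix i
  assume i: "i < length (xs @ replicate m a) \<and> Suc i < length (ys @ replicate m' a)"
  show "(ys @ replicate m' a) ! Suc i \<le> (xs @ replicate m a) ! i"
  proof (cases "Suc i < length ys")
    case True
    then show ?thesis using assms(1) by (auto simp: interlacing_def nth_append)
  next
    case False
    then show ?thesis using i assms by (auto simp: interlacing_def nth_append)
  qed
qed (use assms in auto)

lemma interlacing_if_bracketed:
  fixes xs :: "'a::order list"
  assumes "\<forall>k<length us. (a # xs @ zs) ! Suc k < us ! k \<and> us ! k < (a # xs @ zs) ! k"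
    and "length us = length xs + length zs" "length zs \<le> 1"
  shows "interlacing (<) xs us"
  unfolding interlacing_def
proof (intro conjI allI impI)
  have a: "(a # xs @ zs) ! Suc i = xs ! i" if "i < length xs" for i
    using that by (simp add: nth_append)
  show "length xs \<le> length us" "length us \<le> Suc (length xs)"
    using assms(2,3) by simp_all
  then show "xs ! i < us ! i" if "i < length xs" for i
    using assms(1) that a[OF that] by (metis less_le_trans)
  show "us ! Suc i < xs ! i" if "i < length xs \<and> Suc i < length us" for i
    using assms(1)[rule_format, of "Suc i"] that a[of i] by simp
qed

section \<open>Polynomials given by their roots\<close>

definition poly_of_roots :: "'a::comm_ring_1 list \<Rightarrow> 'a poly" where
  "poly_of_roots rs = (\<Prod>r\<leftarrow>rs. [:-r, 1:])"

lemma poly_of_roots_simps [simp]: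
  "poly_of_roots [] = 1"
  "poly_of_roots (r # rs) = [:-r, 1:] * poly_of_roots rs"
  "poly_of_roots (rs @ ss) = poly_of_roots rs * poly_of_roots ss"
  by (simp_all add: poly_of_roots_def)

lemma poly_of_roots_replicate: "poly_of_roots (replicate m a) = [:-a, 1:] ^ m"
  by (induction m) auto

lemma lead_coeff_poly_of_roots [simp]:
  "lead_coeff (poly_of_roots (rs :: 'a::idom list)) = 1"
  by (induction rs) (simp_all only: poly_of_roots_simps lead_coeff_mult, simp_all)

lemma poly_of_roots_nonzero [simp]: "poly_of_roots (rs :: 'a::idom list) \<noteq> 0"
  using lead_coeff_poly_of_roots[of rs] by (metis leading_coeff_0_iff zero_neq_one)

lemma degree_poly_of_roots [simp]:
  "degree (poly_of_roots (rs :: 'a::idom list)) = length rs"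
proof (induction rs)
  case (Cons r rs)
  then show ?case by (simp only: poly_of_roots_simps, subst degree_mult_eq) auto
qed simp

lemma poly_of_roots_eq_0_iff [simp]:
  "poly (poly_of_roots rs) (x :: 'a::idom) = 0 \<longleftrightarrow> x \<in> set rs"
  by (induction rs) auto

lemma order_poly_of_roots: "order (a :: 'a::idom) (poly_of_roots rs) = count_list rs a"
proof (induction rs)
  case (Cons r rs)
  have "order a [:-r, 1:] = (if a = r then 1 else 0)"
    using order_power_n_n[of r 1] by (auto intro: order_0I)
  moreover have "order a (poly_of_roots (r # rs)) = order a [:-r, 1:] + order a (poly_of_roots rs)"
    by (simp only: poly_of_roots_simps) (rule order_mult, metis poly_of_roots_nonzero poly_of_roots_simps(2))
  ultimately show ?case
    using Cons.IH by simp
qed simp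

lemma map_poly_of_real_mult:
  "map_poly (of_real :: real \<Rightarrow> 'a::{real_algebra_1,comm_ring_1}) (p * q) = map_poly of_real p * map_poly of_real q"
  by (simp add: poly_eq_iff coeff_map_poly coeff_mult)

lemma map_poly_of_real_poly_of_roots:
  "map_poly (of_real :: real \<Rightarrow> 'a::{real_algebra_1,comm_ring_1}) (poly_of_roots rs) = poly_of_roots (map of_real rs)"
  by (induction rs) (simp_all add: map_poly_of_real_mult map_poly_pCons del: mult_pCons_left)

lemma only_real_zeros_smult_poly_of_roots:
  assumes "c \<noteq> 0"
  shows "only_real_zeros (smult c (poly_of_roots rs))"
  unfolding only_real_zeros_def
proof (intro conjI allI impI)
  show "smult c (poly_of_roots rs) \<noteq> 0" using assms by simp
  fix z :: complex
  assume "poly (map_poly of_real (smult c (poly_of_roots rs))) z = 0"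
  then have "z \<in> set (map of_real rs)"
    using assms by (simp add: map_poly_smult map_poly_of_real_poly_of_roots)
  then show "z \<in> \<real>" by auto
qed

lemma zero_list_smult_poly_of_roots:
  "c \<noteq> 0 \<Longrightarrow> sorted_wrt (\<ge>) rs \<Longrightarrow> zero_list (smult c (poly_of_roots rs)) rs"
  using lead_coeff_poly_of_roots[of rs] by (simp add: zero_list_def poly_of_roots_def[symmetric])

lemma separates_smult_poly_of_roots:
  assumes "c \<noteq> 0" "c' \<noteq> 0" "sorted_wrt (\<ge>) rs" "sorted_wrt (\<ge>) ss" "interlacing (\<le>) rs ss"
  shows "separates (smult c (poly_of_roots rs)) (smult c' (poly_of_roots ss))"
  unfolding separates_def
  using assms zero_list_smult_poly_of_roots by (auto simp: interlacing_def)

lemma eq_smult_poly_of_roots: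
  fixes Q :: "'a::idom poly"
  assumes "Q \<noteq> 0" "distinct us" "\<forall>u\<in>set us. poly Q u = 0" "degree Q \<le> length us"
  shows "Q = smult (lead_coeff Q) (poly_of_roots us)"
  using assms
proof (induction us arbitrary: Q)
  case Nil
  then show ?case using degree_0_id[of Q] by simp
next
  case (Cons u us)
  obtain Q' where Q: "Q = [:-u, 1:] * Q'"
    using Cons.prems(3) by (auto simp: poly_eq_0_iff_dvd elim: dvdE)
  with Cons.prems have "Q' \<noteq> 0" "\<forall>v\<in>set us. poly Q' v = 0" "degree Q' \<le> length us"
    by (auto simp: degree_mult_eq simp del: mult_pCons_left)
  then have "Q' = smult (lead_coeff Q') (poly_of_roots us)"
    using Cons by simp
  moreover have "lead_coeff Q = lead_coeff Q'"
    by (simp add: Q lead_coeff_mult del: mult_pCons_left)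
  ultimately show ?case
    by (metis Q mult_smult_right poly_of_roots_simps(2))
qed

lemma poly_of_roots_pos:
  "\<forall>r\<in>set rs. r < x \<Longrightarrow> poly (poly_of_roots rs) (x :: 'a::linordered_idom) > 0"
  by (induction rs) auto

lemma sign_poly_of_roots_below_roots:
  "\<forall>r\<in>set rs. x < r \<Longrightarrow> (-1) ^ length rs * poly (poly_of_roots rs) (x :: 'a::linordered_idom) > 0"
proof (induction rs)
  case (Cons r rs)
  then have "(-1) ^ length rs * poly (poly_of_roots rs) x * (r - x) > 0" by simp
  then show ?case by (simp add: algebra_simps)
qed simp

lemma sign_pderiv_poly_of_roots:
  fixes rs :: "'a::linordered_idom list"
  assumes "sorted_wrt (>) rs" "i < length rs"
  shows "(-1) ^ i * poly (pderiv (poly_of_roots rs)) (rs ! i) > 0"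
proof -
  define xs ys where "xs = take i rs" and "ys = drop (Suc i) rs"
  have rs: "rs = xs @ rs ! i # ys"
    unfolding xs_def ys_def using id_take_nth_drop[OF assms(2)] .
  have "\<forall>x\<in>set xs. rs ! i < x" "\<forall>y\<in>set ys. y < rs ! i"
    using assms(1) by (subst (asm) rs; auto simp: sorted_wrt_append)+
  then have "(-1) ^ length xs * poly (poly_of_roots xs) (rs ! i) > 0"
    "poly (poly_of_roots ys) (rs ! i) > 0"
    by (simp_all add: sign_poly_of_roots_below_roots poly_of_roots_pos)
  moreover have "poly (pderiv (poly_of_roots rs)) (rs ! i)
      = poly (poly_of_roots xs) (rs ! i) * poly (poly_of_roots ys) (rs ! i)"
    by (subst rs) (simp add: pderiv_mult pderiv_pCons del: mult_pCons_left)
  moreover have "length xs = i"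
    using assms(2) by (simp add: xs_def)
  ultimately show ?thesis
    by (metis mult.assoc mult_pos_pos)
qed

lemma roots_between_sign_changes:
  fixes Q :: "real poly"
  assumes "sorted_wrt (>) E" "\<forall>k<length E. (-1) ^ k * poly Q (E ! k) > 0"
  shows "\<exists>us. length us = length E - 1 \<and>
    (\<forall>k<length us. E ! Suc k < us ! k \<and> us ! k < E ! k \<and> poly Q (us ! k) = 0)"
proof -
  have "\<exists>x. E ! Suc k < x \<and> x < E ! k \<and> poly Q x = 0" if k: "k < length E - 1" for k
  proof -
    have lt: "E ! Suc k < E ! k"
      using assms(1) k by (simp add: sorted_wrt_iff_nth_less)
    have "k < length E" "Suc k < length E"
      using k by simp_all
    then have "(-1) ^ k * poly Q (E ! k) > 0" "(-1) ^ Suc k * poly Q (E ! Suc k) > 0"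
      using assms(2) by blast+
    then have "poly Q (E ! Suc k) * poly Q (E ! k) < 0"
      by (cases "even k") (auto intro: mult_pos_neg mult_neg_pos)
    then show ?thesis
      using poly_IVT[OF lt] by blast
  qed
  then obtain f where "\<forall>k<length E - 1. E ! Suc k < f k \<and> f k < E ! k \<and> poly Q (f k) = 0"
    by metis
  then show ?thesis
    by (intro exI[of _ "map f [0..<length E - 1]"]) auto
qed

lemma eq_smult_poly_of_roots_bracketed:
  fixes Q :: "real poly"
  assumes "sorted_wrt (>) E" "\<forall>k<length E. (-1) ^ k * poly Q (E ! k) > 0"
    and "degree Q < length E"
  obtains us where "Q = smult (lead_coeff Q) (poly_of_roots us)" "length us = length E - 1"
    "\<forall>k<length us. E ! Suc k < us ! k \<and> us ! k < E ! k"
proof -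
  obtain us where us: "length us = length E - 1"
    "\<forall>k<length us. E ! Suc k < us ! k \<and> us ! k < E ! k \<and> poly Q (us ! k) = 0"
    using roots_between_sign_changes[OF assms(1,2)] by blast
  have "Q \<noteq> 0"
    using assms(2)[rule_format, of 0] assms(3) by auto
  moreover have "distinct us"
    using sorted_wrt_greater_if_bracketed[of us E] us(2) sorted_wrt_greater_imp_distinct by blast
  ultimately have "Q = smult (lead_coeff Q) (poly_of_roots us)"
    using us assms(3) by (intro eq_smult_poly_of_roots) (auto simp: in_set_conv_nth)
  then show ?thesis
    using that us by auto
qed

section \<open>The polynomials \<open>R n\<close>\<close>

text \<open>In degree \<open>n + 3\<close> the contributions \<open>(n + 1) a\<close> and \<open>-(n + 1) a\<close> of the leading
  coefficient \<open>a\<close> of \<open>R (n + 1)\<close> cancel.\<close>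

lemma degree_R: "degree (R n) \<le> n"
proof (induction n rule: R.induct)
  case (3 n)
  let ?p = "R (Suc n)"
  show ?case
  proof (rule degree_le, intro allI impI)
    fix K
    assume "Suc (Suc n) < K"
    then obtain k where K: "K = Suc (Suc (Suc k))" and "n \<le> k"
      by (metis Suc_le_D Suc_le_eq less_Suc_eq_le)
    then have "coeff ?p (Suc (Suc (Suc k))) = 0" "coeff ?p (Suc (Suc k)) = 0"
      "k \<noteq> n \<Longrightarrow> coeff ?p (Suc k) = 0"
      using "3" by (auto intro!: coeff_eq_0)
    then show "coeff (R (Suc (Suc n))) K = 0"
      by (cases "k = n") (simp_all add: K coeff_pderiv)
  qed
qed simp_all

definition R_cofactor :: "nat \<Rightarrow> nat \<Rightarrow> real poly \<Rightarrow> real poly" where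
  "R_cofactor n m P = [:1, 0, real n:] * P + smult (real m) ([:0, 1, -1:] * P) + [:0, 1, 0, -1:] * pderiv P"

lemma poly_R_cofactor:
  "poly (R_cofactor n m P) y =
     (1 + real n * y\<^sup>2 + real m * (y - y\<^sup>2)) * poly P y + (y - y ^ 3) * poly (pderiv P) y"
  by (simp add: R_cofactor_def algebra_simps power2_eq_square power3_eq_cube)

lemma R_Suc_factor:
  assumes "R (Suc k) = [:1, 1:] ^ m * P" "m \<ge> 1"
  shows "R (Suc (Suc k)) = [:1, 1:] ^ m * R_cofactor (Suc k) m P"
proof -
  define A where "A = [:1, 1::real:]"
  obtain j where m: "m = Suc j"
    using assms(2) by (cases m) auto
  have "pderiv (A ^ Suc j) = smult (real (Suc j)) (A ^ j)"
    by (simp only: pderiv_power_Suc) (simp add: A_def pderiv_pCons)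
  then have "pderiv (A ^ Suc j * P) = smult (real (Suc j)) (A ^ j) * P + A ^ Suc j * pderiv P"
    by (simp only: pderiv_mult) (simp add: algebra_simps)
  moreover have "[:0, 1, 0, -1::real:] = [:0, 1, -1:] * A"
    by (simp add: A_def)
  ultimately show ?thesis
    using assms(1) unfolding A_def[symmetric] m
    by (simp add: R_cofactor_def algebra_simps del: mult_pCons_left)
qed

lemma sign_R_cofactor:
  assumes "c > 0" "sorted_wrt (>) ts" "\<forall>t\<in>set ts. -1 < t \<and> t < 0" "k < Suc (length ts)"
  shows "(-1) ^ k * poly (R_cofactor n m (smult c (poly_of_roots ts))) ((0 # ts) ! k) > 0"
proof (cases k)
  case 0
  then show ?thesis
    using assms poly_of_roots_pos[of ts 0] by (simp add: poly_R_cofactor)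
next
  case (Suc i)
  define t where "t = ts ! i"
  have t: "-1 < t" "t < 0"
    using assms(3,4) Suc by (auto simp: t_def)
  have Pt: "poly (poly_of_roots ts) t = 0"
    using assms(4) Suc by (simp add: t_def)
  have "(-1) ^ k * poly (R_cofactor n m (smult c (poly_of_roots ts))) ((0 # ts) ! k)
      = c * (t ^ 3 - t) * ((-1) ^ i * poly (pderiv (poly_of_roots ts)) t)"
    by (simp add: Suc t_def[symmetric] Pt poly_R_cofactor pderiv_smult algebra_simps)
  moreover have "t ^ 3 - t > 0"
  proof -
    have "t ^ 3 - t = (-t) * (1 - t\<^sup>2)" by (simp add: algebra_simps power2_eq_square power3_eq_cube)
    moreover have "t\<^sup>2 < 1" using t by (simp add: abs_square_less_1)
    ultimately show ?thesis using t by (simp add: mult_neg_pos)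
  qed
  moreover have "(-1) ^ i * poly (pderiv (poly_of_roots ts)) t > 0"
    using sign_pderiv_poly_of_roots[OF assms(2)] assms(4) Suc by (simp add: t_def)
  ultimately show ?thesis
    using assms(1) by simp
qed

definition R_factorization :: "nat \<Rightarrow> real \<Rightarrow> real list \<Rightarrow> bool" where
  "R_factorization n c ts \<longleftrightarrow> c > 0 \<and> sorted_wrt (>) ts \<and> (\<forall>t\<in>set ts. -1 < t \<and> t < 0) \<and>
     length ts = n - (n div 2 + 1) \<and> R n = smult c ([:1, 1:] ^ (n div 2 + 1) * poly_of_roots ts)"

lemma R_factorizationD:
  assumes "R_factorization n c ts"
  shows "c > 0" "sorted_wrt (>) ts" "\<forall>t\<in>set ts. -1 < t \<and> t < 0" "length ts = n - (n div 2 + 1)"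
  using assms by (simp_all add: R_factorization_def)

lemma R_Suc_eq_cofactor:
  assumes "n \<ge> 1" "R_factorization n c ts"
  shows "R (Suc n) = [:1, 1:] ^ (n div 2 + 1) * R_cofactor n (n div 2 + 1) (smult c (poly_of_roots ts))"
proof -
  obtain k where n: "n = Suc k"
    using assms(1) by (cases n) auto
  have "R (Suc k) = [:1, 1:] ^ (n div 2 + 1) * smult c (poly_of_roots ts)"
    using assms(2) unfolding R_factorization_def n by (metis mult_smult_right)
  then have "R (Suc (Suc k)) = [:1, 1:] ^ (n div 2 + 1) * R_cofactor (Suc k) (n div 2 + 1) (smult c (poly_of_roots ts))"
    by (rule R_Suc_factor) simp
  then show ?thesis
    by (simp only: n)
qed

lemma R_factorization_Suc_if_sign_changes:
  fixes Q :: "real poly" and ts zs :: "real list"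
  defines "E \<equiv> 0 # ts @ zs"
  assumes RQ: "R (Suc n) = [:1, 1:] ^ (Suc n div 2 + 1) * Q"
    and E: "sorted_wrt (>) E" "\<forall>e\<in>set E. -1 \<le> e" "\<forall>k<length E. (-1) ^ k * poly Q (E ! k) > 0"
    and len: "length ts + length zs = Suc n - (Suc n div 2 + 1)" "length zs \<le> 1"
  shows "\<exists>c' us. R_factorization (Suc n) c' us \<and> interlacing (<) ts us"
proof -
  have "Q \<noteq> 0"
    using E(3)[rule_format, of 0] by (auto simp: E_def)
  then have "degree (R (Suc n)) = Suc n div 2 + 1 + degree Q"
    by (simp add: RQ degree_mult_eq degree_linear_power del: power_Suc)
  then have "degree Q < length E"
    using degree_R[of "Suc n"] len(1) by (simp add: E_def)
  then obtain us where Q: "Q = smult (lead_coeff Q) (poly_of_roots us)"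
    and us: "length us = length E - 1" "\<forall>k<length us. E ! Suc k < us ! k \<and> us ! k < E ! k"
    using eq_smult_poly_of_roots_bracketed[OF E(1,3)] by blast
  have E_bounds: "\<forall>e\<in>set E. -1 \<le> e \<and> e \<le> 0"
    using E(1,2) by (auto simp: E_def less_imp_le)
  have us_bounds: "\<forall>u\<in>set us. -1 < u \<and> u < 0"
  proof
    fix u
    assume "u \<in> set us"
    then obtain k where k: "k < length us" "u = us ! k"
      by (auto simp: in_set_conv_nth)
    then have "E ! k \<in> set E" "E ! Suc k \<in> set E"
      using us(1) by simp_all
    then show "-1 < u \<and> u < 0"
      using E_bounds us(2) k by fastforce
  qed
  have "poly Q 0 > 0" "poly (poly_of_roots us) 0 > 0"
    using E(3)[rule_format, of 0] us_bounds by (auto simp: E_def intro: poly_of_roots_pos)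
  then have "lead_coeff Q > 0"
    by (subst (asm) (1) Q) (simp add: zero_less_mult_iff)
  moreover have "R (Suc n) = smult (lead_coeff Q) ([:1, 1:] ^ (Suc n div 2 + 1) * poly_of_roots us)"
    using Q RQ by (metis mult_smult_right)
  ultimately have "R_factorization (Suc n) (lead_coeff Q) us"
    using sorted_wrt_greater_if_bracketed[OF us(2)] us_bounds us(1) len(1)
    unfolding R_factorization_def by (simp add: E_def)
  moreover have "interlacing (<) ts us"
    using us len(2) by (intro interlacing_if_bracketed[where a = 0 and zs = zs]) (simp_all add: E_def)
  ultimately show ?thesis by blast
qed

lemma R_factorization_Suc_even:
  assumes "n \<ge> 1" "even n" and R: "R_factorization n c ts"
  shows "\<exists>c' us. R_factorization (Suc n) c' us \<and> interlacing (<) ts us"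
proof -
  define B where "B = R_cofactor n (n div 2 + 1) (smult c (poly_of_roots ts))"
  have ts: "c > 0" "sorted_wrt (>) ts" "\<forall>t\<in>set ts. -1 < t \<and> t < 0" "length ts = n - (n div 2 + 1)"
    using R_factorizationD[OF R] .
  have "poly B (-1) = - c * poly (poly_of_roots ts) (-1)"
    using assms(2) by (auto simp: B_def poly_R_cofactor elim!: evenE)
  moreover have "(-1) ^ length ts * poly (poly_of_roots ts) (-1) > 0"
    using ts(3) by (simp add: sign_poly_of_roots_below_roots)
  ultimately have B_last: "(-1) ^ Suc (length ts) * poly B (-1) > 0"
    using ts(1) by (simp add: mult.left_commute)
  show ?thesis
  proof (rule R_factorization_Suc_if_sign_changes[where Q = B and zs = "[-1]"])
    show "R (Suc n) = [:1, 1:] ^ (Suc n div 2 + 1) * B"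
      using R_Suc_eq_cofactor[OF assms(1) R] assms(2) by (simp add: B_def)
    show "\<forall>k<length (0 # ts @ [-1]). (-1) ^ k * poly B ((0 # ts @ [-1]) ! k) > 0"
    proof (intro allI impI)
      fix k
      assume "k < length (0 # ts @ [-1])"
      then consider "k < Suc (length ts)" | "k = Suc (length ts)"
        by fastforce
      then show "(-1) ^ k * poly B ((0 # ts @ [-1]) ! k) > 0"
      proof cases
        case 1
        then have "(0 # ts @ [-1]) ! k = (0 # ts) ! k"
          using nth_append[of "0 # ts" "[-1]" k] by simp
        then show ?thesis
          using sign_R_cofactor[OF ts(1-3) 1] by (simp add: B_def)
      qed (use B_last in simp)
    qed
    show "length ts + length [-1::real] = Suc n - (Suc n div 2 + 1)"
      using assms(1,2) ts(4) by (auto elim!: evenE)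
  qed (use ts in \<open>auto simp: sorted_wrt_append\<close>)
qed

lemma R_factorization_Suc_odd:
  assumes "odd n" and R: "R_factorization n c ts"
  shows "\<exists>c' us. R_factorization (Suc n) c' us \<and> interlacing (<) ts us"
proof -
  define B where "B = R_cofactor n (n div 2 + 1) (smult c (poly_of_roots ts))"
  have ts: "c > 0" "sorted_wrt (>) ts" "\<forall>t\<in>set ts. -1 < t \<and> t < 0" "length ts = n - (n div 2 + 1)"
    using R_factorizationD[OF R] .
  have "poly B (-1) = 0"
    using assms(1) by (auto simp: B_def poly_R_cofactor elim!: oddE)
  then obtain Q where BQ: "B = [:1, 1:] * Q"
    using poly_eq_0_iff_dvd[of B "-1"] by (auto elim: dvdE)
  show ?thesis
  proof (rule R_factorization_Suc_if_sign_changes[where Q = Q and zs = "[]"])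
    have "Suc n div 2 + 1 = Suc (n div 2 + 1)"
      using assms(1) by (auto elim!: oddE)
    moreover have "R (Suc n) = [:1, 1:] ^ (n div 2 + 1) * ([:1, 1:] * Q)"
      using R_Suc_eq_cofactor[OF _ R] odd_pos[OF assms(1)] unfolding B_def[symmetric] BQ by simp
    ultimately show "R (Suc n) = [:1, 1:] ^ (Suc n div 2 + 1) * Q"
      by (metis mult.assoc power_Suc2)
    show "\<forall>k<length (0 # ts @ []). (-1) ^ k * poly Q ((0 # ts @ []) ! k) > 0"
    proof (intro allI impI)
      fix k
      assume k: "k < length (0 # ts @ [])"
      define e where "e = (0 # ts) ! k"
      have "-1 < e"
        using ts(3) k by (cases k) (auto simp: e_def)
      moreover have "(-1) ^ k * poly B e > 0"
        using sign_R_cofactor[OF ts(1-3)] k by (simp add: B_def e_def)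
      then have "(1 + e) * ((-1) ^ k * poly Q e) > 0"
        by (simp add: BQ algebra_simps)
      ultimately show "(-1) ^ k * poly Q ((0 # ts @ []) ! k) > 0"
        by (simp add: e_def zero_less_mult_iff)
    qed
    show "length ts + length ([] :: real list) = Suc n - (Suc n div 2 + 1)"
      using assms(1) ts(4) by (auto elim!: oddE)
  qed (use ts in auto)
qed

lemma R_factorization_Suc:
  "n \<ge> 1 \<Longrightarrow> R_factorization n c ts \<Longrightarrow> \<exists>c' us. R_factorization (Suc n) c' us \<and> interlacing (<) ts us"
  using R_factorization_Suc_even R_factorization_Suc_odd by blast

lemma R_factorization_exists: "n \<ge> 1 \<Longrightarrow> \<exists>c ts. R_factorization n c ts"
proof (induction n rule: dec_induct)
  case base
  have "R_factorization 1 1 []"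
    by (simp add: R_factorization_def)
  then show ?case by blast
next
  case (step n)
  then show ?case
    using R_factorization_Suc by blast
qed

lemma R_eq_smult_poly_of_roots:
  "R_factorization n c ts \<Longrightarrow> R n = smult c (poly_of_roots (ts @ replicate (n div 2 + 1) (-1)))"
  by (simp add: R_factorization_def poly_of_roots_replicate mult.commute)

lemma poly_R_eq_0_iff:
  assumes "R_factorization n c ts"
  shows "poly (R n) x = 0 \<longleftrightarrow> x = -1 \<or> x \<in> set ts"
  using R_factorizationD(1)[OF assms]
  by (auto simp: R_eq_smult_poly_of_roots[OF assms] simp del: poly_of_roots_simps)

lemma order_R:
  assumes "R_factorization n c ts"
  shows "order x (R n) = (if x = -1 then n div 2 + 1 else if x \<in> set ts then 1 else 0)"
proof -
  have "c \<noteq> 0" "distinct ts" "-1 \<notin> set ts"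
    using R_factorizationD[OF assms] sorted_wrt_greater_imp_distinct by auto
  then show ?thesis
    by (simp add: R_eq_smult_poly_of_roots[OF assms] order_smult order_poly_of_roots
        count_list_replicate count_list_distinct del: poly_of_roots_simps)
qed

lemma separates_R:
  assumes "R_factorization n c ts" "R_factorization (Suc n) c' us" "interlacing (<) ts us"
  shows "separates (R n) (R (Suc n))"
  unfolding R_eq_smult_poly_of_roots[OF assms(1)] R_eq_smult_poly_of_roots[OF assms(2)]
proof (rule separates_smult_poly_of_roots)
  note ts = R_factorizationD[OF assms(1)] and us = R_factorizationD[OF assms(2)]
  show "c \<noteq> 0" "c' \<noteq> 0"
    using ts(1) us(1) by simp_all
  show "sorted_wrt (\<ge>) (ts @ replicate (n div 2 + 1) (-1))"
    using ts(2,3) by (intro sorted_wrt_ge_append_replicate) auto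
  show "sorted_wrt (\<ge>) (us @ replicate (Suc n div 2 + 1) (-1))"
    using us(2,3) by (intro sorted_wrt_ge_append_replicate) auto
  show "interlacing (\<le>) (ts @ replicate (n div 2 + 1) (-1)) (us @ replicate (Suc n div 2 + 1) (-1))"
    using ts(3,4) us(3,4) by (intro interlacing_append_replicate interlacing_mono[OF assms(3)])
      (auto simp: less_imp_le)
qed

lemma nat_ceiling_half: "nat \<lceil>real n / 2\<rceil> = (n + 1) div 2"
  using ceiling_divide_eq_div[where 'a = real, of "int n" 2] by simp

theorem mainTheorem5:
  fixes n :: nat
  assumes "n \<ge> 1"
  shows "only_real_zeros (R n)
    \<and> (\<forall>x::real. poly (R n) x = 0 \<longrightarrow> -1 \<le> x \<and> x < 0)
    \<and> separates (R n) (R (Suc n))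
    \<and> order (-1) (R n) = n div 2 + 1
    \<and> card {x::real. poly (R n) x = 0 \<and> x \<noteq> -1} = nat \<lceil>real n / 2\<rceil> - 1
    \<and> (\<forall>x::real. poly (R n) x = 0 \<and> x \<noteq> -1 \<longrightarrow> order x (R n) = 1)"
proof -
  obtain c ts where R: "R_factorization n c ts"
    using R_factorization_exists assms by blast
  note ts = R_factorizationD[OF R]
  obtain c' us where "R_factorization (Suc n) c' us" "interlacing (<) ts us"
    using R_factorization_Suc[OF assms R] by blast
  then have "separates (R n) (R (Suc n))"
    using R separates_R by blast
  moreover have "only_real_zeros (R n)"
    unfolding R_eq_smult_poly_of_roots[OF R]
    using ts(1) by (intro only_real_zeros_smult_poly_of_roots) simp
  moreover have "{x. poly (R n) x = 0 \<and> x \<noteq> -1} = set ts"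
    using ts(3) by (auto simp: poly_R_eq_0_iff[OF R])
  moreover have "card (set ts) = nat \<lceil>real n / 2\<rceil> - 1"
    using sorted_wrt_greater_imp_distinct[OF ts(2)] ts(4)
    by (simp add: distinct_card nat_ceiling_half)
  ultimately show ?thesis
    using ts(3) by (auto simp: poly_R_eq_0_iff[OF R] order_R[OF R])
qed

end
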